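(* For all positive integers $n,m,k$ with $m\ge k$, every $(n,N,k,m)$-PIR array code over $\mathbb{F}_q$ satisfies $N\ge \frac{mn}{m-k+1}$; i.e. $N_P(n,k,m)\ge \frac{mn}{m-k+1}$. Consequently also $N_B(n,k,m)\ge\frac{mn}{m-k+1}$.
   Context: Fix a finite field $\mathbb{F}_q$; $[n]=\{1,\dots,n\}$. An $(n,N,k,m)$-batch array code (BAC) over $\mathbb{F}_q$ is an $\mathbb{F}_q$-linear map $\mathcal{C}:\mathbf x=(x_1,\dots,x_n)\in\mathbb{F}_q^n\mapsto(\mathbf c_1,\dots,\mathbf c_m)$ with buckets $\mathbf c_\ell\in\mathbb{F}_q^{N_\ell}$, $N_\ell\ge1$ independent of $\mathbf x$, $\sum_\ell N_\ell=N$, such that for every multiset $\{\{i_1,\dots,i_k\}\}$ of elements of $[n]$ there is a partition of $[m]$ into $k$ sets $R_1,\dots,R_k$ such that for each $j\in[k]$, $x_{i_j}$ is an $\mathbb{F}_q$-linear combination of values $f_\ell(\mathbf c_\ell)$, $\ell\in R_j$, for some linear functionals $f_\ell:\mathbb{F}_q^{N_\ell}\to\mathbb{F}_q$ (functionals and coefficients independent of $\mathbf x$); $R_j$ is then called a recovery set of $x_{i_j}$. An $(n,N,k,m)$-PIR array code is defined identically except that the requirement is imposed only for multisets of the form $\{\{i,i,\dots,i\}\}$, i.e. every $x_i$ has $k$ pairwise disjoint recovery sets partitioning $[m]$. For $k\le m$, $N_P(n,k,m)$ (resp. $N_B(n,k,m)$) is the minimum $N$ for which an $(n,N,k,m)$-PIR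 array code (resp. BAC) over $\mathbb{F}_q$ exists; clearly $N_B\ge N_P$. *)

theory Defs
  imports Complex_Main
begin

text \<open>Conventions: indices are 0-based. The message is x : nat => 'a, of which only
x 0, ..., x (n-1) matter. There are m buckets 0..m-1; bucket l has Nb l >= 1 coordinates,
coordinate t < Nb l of bucket l is the linear form  sum_{i<n} G l t i * x i
(so G describes an arbitrary F_q-linear encoding map).\<close>

definition bucket_coord :: "nat \<Rightarrow> (nat \<Rightarrow> nat \<Rightarrow> nat \<Rightarrow> 'a::field) \<Rightarrow> nat \<Rightarrow> nat \<Rightarrow> (nat \<Rightarrow> 'a) \<Rightarrow> 'a" where
  "bucket_coord n G l t x = (\<Sum>i<n. G l t i * x i)"

definition recovery_set :: "nat \<Rightarrow> (nat \<Rightarrow> nat) \<Rightarrow> (nat \<Rightarrow> nat \<Rightarrow> nat \<Rightarrow> 'a::field) \<Rightarrow> nat set \<Rightarrow> nat \<Rightarrow> bool" where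
  "recovery_set n Nb G R i \<longleftrightarrow>
     (\<exists>(f :: nat \<Rightarrow> nat \<Rightarrow> 'a) (c :: nat \<Rightarrow> 'a). \<forall>x :: nat \<Rightarrow> 'a.
        x i = (\<Sum>l\<in>R. c l * (\<Sum>t<Nb l. f l t * bucket_coord n G l t x)))"

definition is_partition :: "(nat \<Rightarrow> nat set) \<Rightarrow> nat \<Rightarrow> nat \<Rightarrow> bool" where
  "is_partition R k m \<longleftrightarrow>
     (\<Union>j<k. R j) = {..<m} \<and> (\<forall>j<k. \<forall>j'<k. j \<noteq> j' \<longrightarrow> R j \<inter> R j' = {})"

definition is_PIR_array_code :: "nat \<Rightarrow> nat \<Rightarrow> nat \<Rightarrow> (nat \<Rightarrow> nat) \<Rightarrow> (nat \<Rightarrow> nat \<Rightarrow> nat \<Rightarrow> 'a::field) \<Rightarrow> bool" where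
  "is_PIR_array_code n k m Nb G \<longleftrightarrow>
     (\<forall>l<m. 1 \<le> Nb l) \<and>
     (\<forall>i<n. \<exists>R. is_partition R k m \<and> (\<forall>j<k. recovery_set n Nb G (R j) i))"

text \<open>Batch array code: requests are arbitrary sequences (i_0,...,i_(k-1)) of indices < n,
which is the same as arbitrary multisets of size k.\<close>

definition is_batch_array_code :: "nat \<Rightarrow> nat \<Rightarrow> nat \<Rightarrow> (nat \<Rightarrow> nat) \<Rightarrow> (nat \<Rightarrow> nat \<Rightarrow> nat \<Rightarrow> 'a::field) \<Rightarrow> bool" where
  "is_batch_array_code n k m Nb G \<longleftrightarrow>
     (\<forall>l<m. 1 \<le> Nb l) \<and>
     (\<forall>req :: nat \<Rightarrow> nat. (\<forall>j<k. req j < n) \<longrightarrow>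
        (\<exists>R. is_partition R k m \<and> (\<forall>j<k. recovery_set n Nb G (R j) (req j))))"

end

theory Submission
  imports Defs "HOL-Library.FuncSet" "HOL-Number_Theory.Cong"
begin

text \<open>Any m - k + 1 buckets must recover every symbol on their own: the remaining k - 1
buckets cannot meet all k disjoint recovery sets of a symbol. Since the encoding restricted
to such buckets is then injective on messages, they hold at least n coordinates. Averaging
over the m cyclic windows of m - k + 1 consecutive buckets, each bucket is counted
m - k + 1 times, so (m - k + 1) N \<ge> m n.\<close>

lemma recovery_set_determines:
  assumes "recovery_set n Nb G R i"
    and "\<And>l t. l \<in> R \<Longrightarrow> t < Nb l \<Longrightarrow> bucket_coord n G l t x = bucket_coord n G l t y"
  shows "x i = y i"
proof -
  obtain f c where fc: "\<And>x. x i = (\<Sum>l\<in>R. c l * (\<Sum>t<Nb l. f l t * bucket_coord n G l t x))"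
    using assms(1) unfolding recovery_set_def by blast
  have "(\<Sum>l\<in>R. c l * (\<Sum>t<Nb l. f l t * bucket_coord n G l t x))
      = (\<Sum>l\<in>R. c l * (\<Sum>t<Nb l. f l t * bucket_coord n G l t y))"
    using assms(2) by (intro sum.cong refl arg_cong2[where f = "(*)"]) auto
  then show ?thesis
    by (simp only: fc[symmetric])
qed

lemma card_field_gt_1: "1 < card (UNIV :: 'a::{finite,field} set)"
proof -
  have "card {0 :: 'a, 1} \<le> card (UNIV :: 'a set)"
    by (rule card_mono) auto
  then show ?thesis by simp
qed

lemma length_le_sum_bucket_sizes:
  fixes G :: "nat \<Rightarrow> nat \<Rightarrow> nat \<Rightarrow> 'a::{finite,field}"
  assumes "finite S" and recover: "\<And>i. i < n \<Longrightarrow> \<exists>R\<subseteq>S. recovery_set n Nb G R i"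
  shows "n \<le> (\<Sum>l\<in>S. Nb l)"
proof -
  define X where "X = PiE {..<n} (\<lambda>_. UNIV :: 'a set)"
  define I where "I = Sigma S (\<lambda>l. {..<Nb l})"
  define enc where "enc x = restrict (\<lambda>(l, t). bucket_coord n G l t x) I" for x
  have "finite I"
    unfolding I_def using \<open>finite S\<close> by auto
  have "inj_on enc X"
  proof (rule inj_onI)
    fix x y assume "x \<in> X" "y \<in> X" and "enc x = enc y"
    show "x = y"
    proof
      fix i
      show "x i = y i"
      proof (cases "i < n")
        case True
        then obtain R where "R \<subseteq> S" "recovery_set n Nb G R i"
          using recover by blast
        moreover have "bucket_coord n G l t x = bucket_coord n G l t y"
          if "l \<in> R" "t < Nb l" for l t
        proof -
          have "(l, t) \<in> I"
            unfolding I_def using that \<open>R \<subseteq> S\<close> by auto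
          then show ?thesis
            using fun_cong[OF \<open>enc x = enc y\<close>, of "(l, t)"] by (simp add: enc_def)
        qed
        ultimately show ?thesis
          using recovery_set_determines by blast
      next
        case False
        then show ?thesis
          using \<open>x \<in> X\<close> \<open>y \<in> X\<close> unfolding X_def by (auto simp: PiE_def extensional_def)
      qed
    qed
  qed
  moreover have "enc ` X \<subseteq> PiE I (\<lambda>_. UNIV)"
    unfolding enc_def by auto
  ultimately have "card X \<le> card (PiE I (\<lambda>_. UNIV :: 'a set))"
    using \<open>finite I\<close> by (intro card_inj_on_le) (auto simp: finite_PiE)
  then have "card (UNIV :: 'a set) ^ n \<le> card (UNIV :: 'a set) ^ card I"
    using \<open>finite I\<close> by (simp add: X_def card_PiE)
  moreover have "card I = (\<Sum>l\<in>S. Nb l)"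
    unfolding I_def using \<open>finite S\<close> by (simp add: card_SigmaI)
  ultimately show ?thesis
    using card_field_gt_1 power_le_imp_le_exp by metis
qed

lemma partition_part_subset:
  assumes "is_partition R k m" and "card ({..<m} - S) < k"
  shows "\<exists>j<k. R j \<subseteq> S"
proof (rule ccontr)
  define T where "T = {..<m} - S"
  have "finite T"
    by (simp add: T_def)
  assume no_part: "\<not> (\<exists>j<k. R j \<subseteq> S)"
  have "R j \<inter> T \<noteq> {}" if "j < k" for j
  proof -
    have "R j \<subseteq> {..<m}"
      using assms(1) that unfolding is_partition_def by blast
    moreover have "\<not> R j \<subseteq> S"
      using no_part that by blast
    ultimately show ?thesis
      unfolding T_def by blast
  qed
  then have meets: "1 \<le> card (R j \<inter> T)" if "j < k" for j
    using that \<open>finite T\<close> by (simp add: Suc_le_eq card_gt_0_iff)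
  have disjoint: "(R i \<inter> T) \<inter> (R j \<inter> T) = {}" if "i < k" "j < k" "i \<noteq> j" for i j
    using assms(1) that unfolding is_partition_def by blast
  have "k \<le> (\<Sum>j<k. card (R j \<inter> T))"
    using sum_mono[of "{..<k}" "\<lambda>_. 1", OF meets] by simp
  also have "\<dots> = card (\<Union>j<k. R j \<inter> T)"
    using \<open>finite T\<close> disjoint by (intro card_UN_disjoint[symmetric]) auto
  also have "\<dots> \<le> card T"
    using \<open>finite T\<close> by (intro card_mono) auto
  finally show False
    using assms(2) T_def by simp
qed

lemma batch_array_code_imp_PIR_array_code:
  assumes "is_batch_array_code n k m Nb G"
  shows "is_PIR_array_code n k m Nb G"
  unfolding is_PIR_array_code_def
proof (intro conjI allI impI)
  show "1 \<le> Nb l" if "l < m" for l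
    using assms that unfolding is_batch_array_code_def by blast
  show "\<exists>R. is_partition R k m \<and> (\<forall>j<k. recovery_set n Nb G (R j) i)" if "i < n" for i
    using assms that unfolding is_batch_array_code_def by (auto dest: spec[of _ "\<lambda>_. i"])
qed

definition cyclic_window :: "nat \<Rightarrow> nat \<Rightarrow> nat \<Rightarrow> nat set" where
  "cyclic_window m w s = (\<lambda>d. (s + d) mod m) ` {..<w}"

lemma inj_on_add_mod: "inj_on (\<lambda>s. (s + d) mod (m::nat)) {..<m}"
  by (rule inj_onI) (metis cong_add_rcancel_nat cong_def lessThan_iff mod_less)

lemma bij_betw_add_mod:
  assumes "0 < (m::nat)"
  shows "bij_betw (\<lambda>s. (s + d) mod m) {..<m} {..<m}"
  by (simp add: bij_betw_def inj_on_add_mod endo_inj_surj assms image_subset_iff)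

lemma cyclic_window_subset:
  assumes "0 < m"
  shows "cyclic_window m w s \<subseteq> {..<m}"
  using assms by (auto simp: cyclic_window_def)

lemma inj_on_cyclic_window:
  fixes m :: nat
  assumes "w \<le> m"
  shows "inj_on (\<lambda>d. (s + d) mod m) {..<w}"
proof -
  have "{..<w} \<subseteq> {..<m}"
    using assms by auto
  with inj_on_add_mod have "inj_on (\<lambda>d. (d + s) mod m) {..<w}"
    by (rule inj_on_subset)
  then show ?thesis
    by (simp add: add.commute)
qed

lemma card_cyclic_window:
  assumes "w \<le> m"
  shows "card (cyclic_window m w s) = w"
  using inj_on_cyclic_window[OF assms] by (simp add: cyclic_window_def card_image)

lemma sum_cyclic_windows:
  assumes "0 < m" and "w \<le> m"
  shows "(\<Sum>s<m. \<Sum>l\<in>cyclic_window m w s. f l) = w * (\<Sum>l<m. f l)"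
proof -
  have "(\<Sum>s<m. \<Sum>l\<in>cyclic_window m w s. f l) = (\<Sum>s<m. \<Sum>d<w. f ((s + d) mod m))"
    unfolding cyclic_window_def using inj_on_cyclic_window[OF assms(2)] by (simp add: sum.reindex)
  also have "\<dots> = (\<Sum>d<w. \<Sum>s<m. f ((s + d) mod m))"
    by (rule sum.swap)
  also have "\<dots> = (\<Sum>d<w. \<Sum>l<m. f l)"
    using sum.reindex_bij_betw[OF bij_betw_add_mod[OF assms(1)], of f] by simp
  finally show ?thesis by simp
qed

lemma PIR_array_code_length_bound:
  fixes G :: "nat \<Rightarrow> nat \<Rightarrow> nat \<Rightarrow> 'a::{finite,field}"
  assumes "0 < k" and "k \<le> m" and code: "is_PIR_array_code n k m Nb G"
  shows "real m * real n \<le> real (m - k + 1) * real (\<Sum>l<m. Nb l)"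
proof -
  define w where "w = m - k + 1"
  have "0 < m" "w \<le> m"
    using assms(1,2) by (auto simp: w_def)
  have window: "n \<le> (\<Sum>l\<in>cyclic_window m w s. Nb l)" for s
  proof (rule length_le_sum_bucket_sizes)
    show "finite (cyclic_window m w s)"
      by (simp add: cyclic_window_def)
    have "card ({..<m} - cyclic_window m w s) < k"
      using assms(1,2) \<open>0 < m\<close> \<open>w \<le> m\<close>
      by (simp add: card_Diff_subset cyclic_window_subset card_cyclic_window w_def
          finite_subset[OF cyclic_window_subset])
    then show "\<exists>R\<subseteq>cyclic_window m w s. recovery_set n Nb G R i" if "i < n" for i
      using code that partition_part_subset unfolding is_PIR_array_code_def by metis
  qed
  have "m * n \<le> (\<Sum>s<m. \<Sum>l\<in>cyclic_window m w s. Nb l)"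
    using sum_mono[of "{..<m}" "\<lambda>_. n", OF window] by simp
  also have "\<dots> = w * (\<Sum>l<m. Nb l)"
    using \<open>0 < m\<close> \<open>w \<le> m\<close> by (rule sum_cyclic_windows)
  finally show ?thesis
    unfolding w_def by (metis of_nat_le_iff of_nat_mult)
qed

theorem theorem3p1:
  fixes n k m :: nat
  assumes "0 < n" and "0 < k" and "0 < m" and "k \<le> m"
  shows "(\<forall>(Nb :: nat \<Rightarrow> nat) (G :: nat \<Rightarrow> nat \<Rightarrow> nat \<Rightarrow> 'a::{finite,field}).
            is_PIR_array_code n k m Nb G \<longrightarrow>
            real m * real n / real (m - k + 1) \<le> real (\<Sum>l<m. Nb l))
       \<and> (\<forall>(Nb :: nat \<Rightarrow> nat) (G :: nat \<Rightarrow> nat \<Rightarrow> nat \<Rightarrow> 'a::{finite,field}).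
            is_batch_array_code n k m Nb G \<longrightarrow>
            real m * real n / real (m - k + 1) \<le> real (\<Sum>l<m. Nb l))"
proof -
  have "real m * real n / real (m - k + 1) \<le> real (\<Sum>l<m. Nb l)"
    if "is_PIR_array_code n k m Nb (G :: nat \<Rightarrow> nat \<Rightarrow> nat \<Rightarrow> 'a)" for Nb G
    using PIR_array_code_length_bound[OF assms(2,4) that]
    by (simp add: divide_le_eq mult.commute)
  then show ?thesis
    using batch_array_code_imp_PIR_array_code by blast
qed

end
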